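(* Let $A$ be a synaptic algebra and let $p,q\in P$ be in generic position ($p\wedge q=p\wedge q^{\perp}=p^{\perp}\wedge q=p^{\perp}\wedge q^{\perp}=0$). Let $c:=(pqp+p^{\perp}q^{\perp}p^{\perp})^{1/2}$, $s:=(pq^{\perp}p+p^{\perp}qp^{\perp})^{1/2}$, let $u$ be the symmetry of the polar decomposition of $p-q^{\perp}$ (so $p-q^{\perp}=cu=uc$) and $v$ the symmetry of the polar decomposition of $p-q$ (so $p-q=sv=vs$), and put $j:=uvp+pvu$ and $\ell:=2p-1$. Then: (i) $j$ is a symmetry in $A$ exchanging $p$ and $p^{\perp}$, i.e. $jpj=p^{\perp}$; (ii) $j$ commutes with both $s$ and $c$; (iii) $j=pj+jp$; (iv) $\ell=2p-1=p-p^{\perp}=cu+sv$ is a symmetry that commutes with $p$, $c$ and $s$.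
   Context: Synaptic algebra (Foulis): $R$ is a real linear associative algebra with unit $1$, and $A\subseteq R$ is a real linear subspace with $1\in A$. For $a,b\in A$ write $aCb$ iff $ab=ba$; $C(a):=\{b\in A: aCb\}$; $CC(a):=\{b\in A: bCd \text{ for all } d\in C(a)\}$. $A$ is a synaptic algebra with enveloping algebra $R$ iff: (SA1) $A$ is a partially ordered archimedean real linear space with positive cone $A^+$, $1$ is an order unit, $\|\cdot\|$ the order-unit norm; (SA2) $a\in A\Rightarrow a^2\in A^+$; (SA3) $a,b\in A^+\Rightarrow aba\in A^+$; (SA4) if $a\in A$, $b\in A^+$, $aba=0$ then $ab=ba=0$; (SA5) if $a\in A^+$ there is $b\in A^+\cap CC(a)$ with $b^2=a$; (SA6) for $a\in A$ there is $p=p^2\in A$ with $ab=0\Leftrightarrow pb=0$ for all $b\in A$; (SA7) if $1\le a$ there is $b\in A$ with $ab=ba=1$; (SA8) if $a,b\in A$, $a_1\le a_2\le\cdots$ are pairwise commuting elements of $C(b)$ with $\|a-a_n\|\to0$, then $a\in C(b)$. $A$ is nondegenerate ($1\neq0$). Products are computed in $R$. $P:=\{p\in A:p=p^2\}$ with inherited order is an orthomodular lattice with $p^{\perp}:=1-p$, meet $\wedge$, join $\vee$. For $0\le a$, $a^{1/2}$ is its unique positive square root in $A$, $|a|:=(a^2)^{1/2}$; $a^{\circ}$ is the carrier of $a$ (the unique projection with $ab=0\Leftrightarrow a^{\circ}b=0$ for all $b\in A$). A symmetry is $u\in A$ with $u^2=1$. For $a\in A$, the signum $t$ of $a$ is the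 partial symmetry with $t^2=a^{\circ}$, $t\in CC(a)$, $a=|a|t=t|a|$; the symmetry of the polar decomposition of $a$ is $t+(a^{\circ})^{\perp}$, a symmetry in $CC(a)$ with $a=|a|u=u|a|$. A symmetry $w$ exchanges projections $x,y$ iff $wxw=y$. *)

theory Defs
  imports Main "HOL.Real_Vector_Spaces"
begin

text \<open>The enveloping algebra R is the type 'a (a real associative algebra with unit);
  A is a subset of it and K is the positive cone of A.\<close>

definition sa_le :: "'a::real_algebra_1 set \<Rightarrow> 'a \<Rightarrow> 'a \<Rightarrow> bool" where
  "sa_le K a b \<longleftrightarrow> b - a \<in> K"

definition onorm :: "'a::real_algebra_1 set \<Rightarrow> 'a \<Rightarrow> real" where
  "onorm K a = Inf {l::real. 0 \<le> l \<and> sa_le K (- (l *\<^sub>R 1)) a \<and> sa_le K a (l *\<^sub>R 1)}"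

definition Comm :: "'a::real_algebra_1 set \<Rightarrow> 'a \<Rightarrow> 'a set" where
  "Comm A a = {b \<in> A. a * b = b * a}"

definition CComm :: "'a::real_algebra_1 set \<Rightarrow> 'a \<Rightarrow> 'a set" where
  "CComm A a = {b \<in> A. \<forall>d \<in> Comm A a. b * d = d * b}"

definition synaptic_algebra :: "'a::real_algebra_1 set \<Rightarrow> 'a set \<Rightarrow> bool" where
  "synaptic_algebra A K \<longleftrightarrow>
     \<comment> \<open>A is a real linear subspace containing 1; nondegenerate\<close>
     (0::'a) \<in> A \<and> 1 \<in> A \<and> (\<forall>a\<in>A. \<forall>b\<in>A. a + b \<in> A) \<and> (\<forall>r::real. \<forall>a\<in>A. r *\<^sub>R a \<in> A)
     \<and> (1::'a) \<noteq> 0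
     \<comment> \<open>SA1: partially ordered (positive cone K), archimedean, 1 an order unit\<close>
     \<and> K \<subseteq> A \<and> (\<forall>a\<in>K. \<forall>b\<in>K. a + b \<in> K) \<and> (\<forall>r::real. \<forall>a\<in>K. 0 \<le> r \<longrightarrow> r *\<^sub>R a \<in> K)
     \<and> (\<forall>a\<in>K. -a \<in> K \<longrightarrow> a = 0)
     \<and> (\<forall>a\<in>A. \<forall>b\<in>A. (\<forall>n::nat. sa_le K (real n *\<^sub>R a) b) \<longrightarrow> sa_le K a 0)
     \<and> (\<forall>a\<in>A. \<exists>n::nat. sa_le K a (real n *\<^sub>R 1))
     \<comment> \<open>SA2\<close>
     \<and> (\<forall>a\<in>A. a * a \<in> K)
     \<comment> \<open>SA3\<close>
     \<and> (\<forall>a\<in>K. \<forall>b\<in>K. a * b * a \<in> K)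
     \<comment> \<open>SA4\<close>
     \<and> (\<forall>a\<in>A. \<forall>b\<in>K. a * b * a = 0 \<longrightarrow> a * b = 0 \<and> b * a = 0)
     \<comment> \<open>SA5\<close>
     \<and> (\<forall>a\<in>K. \<exists>b\<in>K \<inter> CComm A a. b * b = a)
     \<comment> \<open>SA6\<close>
     \<and> (\<forall>a\<in>A. \<exists>p\<in>A. p * p = p \<and> (\<forall>b\<in>A. a * b = 0 \<longleftrightarrow> p * b = 0))
     \<comment> \<open>SA7\<close>
     \<and> (\<forall>a\<in>A. sa_le K 1 a \<longrightarrow> (\<exists>b\<in>A. a * b = 1 \<and> b * a = 1))
     \<comment> \<open>SA8\<close>
     \<and> (\<forall>a\<in>A. \<forall>b\<in>A. \<forall>f::nat \<Rightarrow> 'a.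
           (\<forall>n. f n \<in> Comm A b) \<and> (\<forall>n. sa_le K (f n) (f (Suc n)))
           \<and> (\<forall>m n. f m * f n = f n * f m)
           \<and> (\<lambda>n. onorm K (a - f n)) \<longlonglongrightarrow> 0
           \<longrightarrow> a \<in> Comm A b)"

definition Proj :: "'a::real_algebra_1 set \<Rightarrow> 'a set" where
  "Proj A = {p \<in> A. p * p = p}"

definition pcomp :: "'a::real_algebra_1 \<Rightarrow> 'a" where
  "pcomp p = 1 - p"

definition pmeet :: "'a::real_algebra_1 set \<Rightarrow> 'a set \<Rightarrow> 'a \<Rightarrow> 'a \<Rightarrow> 'a" where
  "pmeet A K p q = (THE r. r \<in> Proj A \<and> sa_le K r p \<and> sa_le K r q
      \<and> (\<forall>x\<in>Proj A. sa_le K x p \<and> sa_le K x q \<longrightarrow> sa_le K x r))"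

definition generic_position :: "'a::real_algebra_1 set \<Rightarrow> 'a set \<Rightarrow> 'a \<Rightarrow> 'a \<Rightarrow> bool" where
  "generic_position A K p q \<longleftrightarrow>
     pmeet A K p q = 0 \<and> pmeet A K p (pcomp q) = 0 \<and>
     pmeet A K (pcomp p) q = 0 \<and> pmeet A K (pcomp p) (pcomp q) = 0"

definition sa_sqrt :: "'a::real_algebra_1 set \<Rightarrow> 'a \<Rightarrow> 'a" where
  "sa_sqrt K a = (THE b. b \<in> K \<and> b * b = a)"

definition sa_abs :: "'a::real_algebra_1 set \<Rightarrow> 'a \<Rightarrow> 'a" where
  "sa_abs K a = sa_sqrt K (a * a)"

definition carrier_proj :: "'a::real_algebra_1 set \<Rightarrow> 'a \<Rightarrow> 'a" where
  "carrier_proj A a = (THE p. p \<in> Proj A \<and> (\<forall>b\<in>A. a * b = 0 \<longleftrightarrow> p * b = 0))"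

definition signum :: "'a::real_algebra_1 set \<Rightarrow> 'a set \<Rightarrow> 'a \<Rightarrow> 'a" where
  "signum A K a = (THE t. t \<in> A \<and> t * t = carrier_proj A a \<and> t \<in> CComm A a
       \<and> a = sa_abs K a * t \<and> a = t * sa_abs K a)"

definition polar_sym :: "'a::real_algebra_1 set \<Rightarrow> 'a set \<Rightarrow> 'a \<Rightarrow> 'a" where
  "polar_sym A K a = signum A K a + pcomp (carrier_proj A a)"

definition symmetry :: "'a::real_algebra_1 set \<Rightarrow> 'a \<Rightarrow> bool" where
  "symmetry A u \<longleftrightarrow> u \<in> A \<and> u * u = 1"

end

theory Submission
  imports Defs
begin

text \<open>Put \<open>a = p - q\<^sup>\<perp>\<close> and \<open>b = p - q\<close>. Since p and q are idempotent,
  \<open>a\<^sup>2 + b\<^sup>2 = 1\<close>, \<open>a b = - b a\<close> and \<open>a + b = 2p - 1\<close>. Generic position says that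
  neither a nor b annihilates a nonzero projection, so both have carrier 1: their polar
  symmetries u, v are genuine symmetries with \<open>a = c u\<close>, \<open>b = s v\<close>, and c, s are faithful.
  Everything in sight then commutes except u and v, which anticommute because
  \<open>c s (u v + v u) = a b + b a = 0\<close>. From these relations alone, \<open>j = s u - c v\<close> is a symmetry
  anticommuting with \<open>2p - 1 = c u + s v\<close>, which gives all four claims by ring arithmetic.\<close>

lemma add_self_cancel:
  fixes x y :: "'a::real_vector"
  assumes "x + x = y + y"
  shows "x = y"
proof -
  have "(2::real) *\<^sub>R x = 2 *\<^sub>R y"
    using assms by (simp only: scaleR_2)
  then show ?thesis by simp
qed

lemma idempotent_diff_identities:
  fixes p q :: "'a::real_algebra_1"
  assumes "p * p = p" and "q * q = q"
  shows "(p - pcomp q) * (p - q) = - ((p - q) * (p - pcomp q))"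
    and "(p - pcomp q) * (p - pcomp q) + (p - q) * (p - q) = 1"
    and "(p - pcomp q) * (p - pcomp q) = p * q * p + pcomp p * pcomp q * pcomp p"
    and "(p - q) * (p - q) = p * pcomp q * p + pcomp p * q * pcomp p"
  using assms by (simp_all add: pcomp_def algebra_simps)

locale cs_frame =
  fixes c s u v :: "'a::ring_1"
  assumes u_sq: "u * u = 1" and v_sq: "v * v = 1" and vu: "v * u = - (u * v)"
    and uc: "u * c = c * u" and us: "u * s = s * u"
    and vc: "v * c = c * v" and vs: "v * s = s * v"
    and sc: "s * c = c * s" and s_sq: "s * s = 1 - c * c"
begin

text \<open>The relations in right-nested form, as they occur after normalisation with
  \<open>algebra_simps\<close>.\<close>

lemma cs_rewrites:
  "u * (u * z) = z" "v * (v * z) = z" "v * (u * z) = - (u * (v * z))"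
  "u * (c * z) = c * (u * z)" "u * (s * z) = s * (u * z)"
  "v * (c * z) = c * (v * z)" "v * (s * z) = s * (v * z)"
  "s * (c * z) = c * (s * z)" "s * (s * z) = z - c * (c * z)"
  by (simp_all add: mult.assoc[symmetric] u_sq v_sq vu uc us vc vs sc s_sq left_diff_distrib)

lemmas cs_simps = u_sq v_sq vu uc us vc vs sc s_sq cs_rewrites

lemma rotation_sq: "(c * u + s * v) * (c * u + s * v) = 1"
  by (simp add: algebra_simps cs_simps)

lemma rotation_comm:
  "(c * u + s * v) * c = c * (c * u + s * v)" "(c * u + s * v) * s = s * (c * u + s * v)"
  by (simp_all add: algebra_simps cs_simps)

lemma exchange_sq: "(s * u - c * v) * (s * u - c * v) = 1"
  by (simp add: algebra_simps cs_simps)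

lemma exchange_comm:
  "(s * u - c * v) * c = c * (s * u - c * v)" "(s * u - c * v) * s = s * (s * u - c * v)"
  by (simp_all add: algebra_simps cs_simps)

lemma exchange_rotation_anticomm:
  "(s * u - c * v) * (c * u + s * v) = - ((c * u + s * v) * (s * u - c * v))"
  by (simp add: algebra_simps cs_simps)

lemma exchange_rotation_exchange:
  "(s * u - c * v) * (c * u + s * v) * (s * u - c * v) = - (c * u + s * v)"
  by (simp add: algebra_simps cs_simps)

lemma polar_product_rotation:
  "u * v * (1 + (c * u + s * v)) + (1 + (c * u + s * v)) * v * u = (s * u - c * v) + (s * u - c * v)"
  by (simp add: algebra_simps cs_simps)

end

locale cs_frame_proj = cs_frame c s u v for c s u v :: "'a::real_algebra_1" +
  fixes p :: 'a
  assumes rotation_eq: "c * u + s * v = 2 * p - 1"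
begin

lemma double_p: "p + p = 1 + (c * u + s * v)"
  by (simp add: rotation_eq mult_2)

lemma polar_product_eq: "u * v * p + p * v * u = s * u - c * v"
proof (rule add_self_cancel)
  have "(u * v * p + p * v * u) + (u * v * p + p * v * u) = u * v * (p + p) + (p + p) * v * u"
    by (simp add: algebra_simps)
  also have "\<dots> = (s * u - c * v) + (s * u - c * v)"
    by (simp only: double_p polar_product_rotation)
  finally show "(u * v * p + p * v * u) + (u * v * p + p * v * u) = (s * u - c * v) + (s * u - c * v)" .
qed

lemma exchange_proj: "(s * u - c * v) * p * (s * u - c * v) = 1 - p"
proof (rule add_self_cancel)
  let ?j = "s * u - c * v" and ?l = "c * u + s * v"
  have "?j * p * ?j + ?j * p * ?j = ?j * (p + p) * ?j"
    by (simp add: algebra_simps)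
  also have "\<dots> = ?j * ?j + ?j * ?l * ?j"
    by (simp add: double_p algebra_simps)
  also have "\<dots> = 1 - ?l"
    by (simp add: exchange_sq exchange_rotation_exchange)
  also have "\<dots> = (1 - p) + (1 - p)"
    by (simp add: rotation_eq mult_2)
  finally show "?j * p * ?j + ?j * p * ?j = (1 - p) + (1 - p)" .
qed

lemma exchange_split: "p * (s * u - c * v) + (s * u - c * v) * p = s * u - c * v"
proof (rule add_self_cancel)
  let ?j = "s * u - c * v" and ?l = "c * u + s * v"
  have "(p * ?j + ?j * p) + (p * ?j + ?j * p) = (p + p) * ?j + ?j * (p + p)"
    by (simp add: algebra_simps)
  also have "\<dots> = (?j + ?j) + (?l * ?j + ?j * ?l)"
    by (simp add: double_p algebra_simps)
  also have "\<dots> = ?j + ?j"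
    by (simp add: exchange_rotation_anticomm)
  finally show "(p * ?j + ?j * p) + (p * ?j + ?j * p) = ?j + ?j" .
qed

end

locale synaptic =
  fixes A K :: "'a::real_algebra_1 set"
  assumes synaptic_algebra: "synaptic_algebra A K"
begin

lemma one_mem: "1 \<in> A"
  and add_mem: "a \<in> A \<Longrightarrow> b \<in> A \<Longrightarrow> a + b \<in> A"
  and scaleR_mem: "a \<in> A \<Longrightarrow> r *\<^sub>R a \<in> A"
  and cone_subset: "K \<subseteq> A"
  and cone_antisym: "a \<in> K \<Longrightarrow> - a \<in> K \<Longrightarrow> a = 0"
  and square_pos: "a \<in> A \<Longrightarrow> a * a \<in> K"
  and sandwich_pos: "a \<in> K \<Longrightarrow> b \<in> K \<Longrightarrow> a * b * a \<in> K"
  and sandwich_eq_0: "a \<in> A \<Longrightarrow> b \<in> K \<Longrightarrow> a * b * a = 0 \<Longrightarrow> a * b = 0 \<and> b * a = 0"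
  and sqrt_exists: "a \<in> K \<Longrightarrow> \<exists>b\<in>K \<inter> CComm A a. b * b = a"
  and carrier_exists: "a \<in> A \<Longrightarrow> \<exists>e\<in>A. e * e = e \<and> (\<forall>b\<in>A. a * b = 0 \<longleftrightarrow> e * b = 0)"
  by (insert synaptic_algebra, unfold synaptic_algebra_def, (elim conjE, simp)+)

lemma cone_mem: "a \<in> K \<Longrightarrow> a \<in> A"
  using cone_subset by blast

lemma diff_mem: "a \<in> A \<Longrightarrow> b \<in> A \<Longrightarrow> a - b \<in> A"
  by (metis add_mem scaleR_mem scaleR_minus1_left diff_conv_add_uminus)

lemma square_mem: "a \<in> A \<Longrightarrow> a * a \<in> A"
  using square_pos cone_mem by blast

lemma one_pos: "1 \<in> K"
  using square_pos[OF one_mem] by simp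

lemma jordan_mem:
  assumes "a \<in> A" and "b \<in> A"
  shows "a * b + b * a \<in> A"
proof -
  have "a * b + b * a = (a + b) * (a + b) - a * a - b * b"
    by (simp add: algebra_simps)
  then show ?thesis
    using assms by (simp add: add_mem diff_mem square_mem)
qed

lemma commuting_mult_mem:
  assumes "a \<in> A" and "b \<in> A" and "a * b = b * a"
  shows "a * b \<in> A"
proof -
  have "a * b = (1/2::real) *\<^sub>R (a * b + b * a)"
    using assms(3) by (simp add: scaleR_2[symmetric])
  also have "\<dots> \<in> A"
    using assms(1,2) by (intro scaleR_mem jordan_mem)
  finally show ?thesis .
qed

lemma sandwich_mem:
  assumes "a \<in> A" and "b \<in> A"
  shows "a * b * a \<in> A"
proof -
  have "a * b * a = (1/2::real) *\<^sub>R (((a*b + b*a) * a + a * (a*b + b*a)) - ((a*a) * b + b * (a*a)))"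
    by (simp add: scaleR_2[symmetric] algebra_simps)
  then show ?thesis
    using assms by (simp add: scaleR_mem jordan_mem diff_mem square_mem)
qed

lemma square_eq_0: "d \<in> A \<Longrightarrow> d * d = 0 \<Longrightarrow> d = 0"
  using sandwich_eq_0[OF _ one_pos] by simp

lemma mult_eq_0_commute:
  assumes "a \<in> A" and "x \<in> A" and "a * x = 0"
  shows "x * a = 0"
proof (rule square_eq_0)
  show "x * a \<in> A"
    using jordan_mem[OF assms(2,1)] assms(3) by simp
  have "x * a * (x * a) = x * (a * x) * a"
    by (simp add: mult.assoc)
  then show "x * a * (x * a) = 0"
    using assms(3) by simp
qed

lemma CComm_commute: "r \<in> CComm A x \<Longrightarrow> d \<in> A \<Longrightarrow> d * x = x * d \<Longrightarrow> r * d = d * r"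
  by (auto simp: CComm_def Comm_def)

text \<open>The difference d of two positive roots satisfies \<open>d b d + d b\<^sub>0 d = 0\<close>
  with both summands positive, so both vanish, whence \<open>d\<^sup>2 = 0\<close>.\<close>

lemma pos_sqrt_unique:
  assumes x: "x \<in> K" and b0: "b0 \<in> K" "b0 \<in> CComm A x" "b0 * b0 = x"
    and b: "b \<in> K" "b * b = x"
  shows "b = b0"
proof -
  have bA: "b \<in> A" and b0A: "b0 \<in> A"
    using b b0 cone_mem by auto
  have "b \<in> Comm A x"
    using bA b by (auto simp: Comm_def mult.assoc)
  then have cb: "b0 * b = b * b0"
    using b0 by (auto simp: CComm_def)
  define d where "d = b - b0"
  have dA: "d \<in> A"
    using bA b0A by (simp add: d_def diff_mem)
  have sandwich_d: "d * y * d \<in> K" if y: "y \<in> K" "y * b0 = b0 * y" "y * b = b * y" for y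
  proof -
    obtain r where r: "r \<in> K" "r \<in> CComm A y" "r * r = y"
      using sqrt_exists[OF y(1)] by blast
    have "r * d = d * r"
      using CComm_commute[OF r(2) dA] y(2,3) by (simp add: d_def algebra_simps)
    then have "d * y * d = r * (d * d) * r"
      using r(3) by (metis mult.assoc)
    then show ?thesis
      using sandwich_pos[OF r(1) square_pos[OF dA]] by simp
  qed
  have "d * b * d + d * b0 * d = (b * b - b0 * b0 + (b * b0 - b0 * b)) * d"
    by (simp add: d_def algebra_simps)
  also have "\<dots> = 0"
    using b b0 cb by simp
  finally have sum0: "d * b * d = - (d * b0 * d)"
    by (simp add: eq_neg_iff_add_eq_0)
  then have "d * b * d = 0"
    using cone_antisym sandwich_d[of b] sandwich_d[of b0] b b0 cb by simp
  then have "d * b = 0" "d * b0 = 0"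
    using sum0 sandwich_eq_0[OF dA b(1)] sandwich_eq_0[OF dA b0(1)] by auto
  then have "d * d = 0"
    by (simp add: d_def algebra_simps)
  then show ?thesis
    using square_eq_0[OF dA] by (simp add: d_def)
qed

lemma sa_sqrt:
  assumes "x \<in> K"
  shows sa_sqrt_pos: "sa_sqrt K x \<in> K"
    and sa_sqrt_square: "sa_sqrt K x * sa_sqrt K x = x"
    and sa_sqrt_CComm: "sa_sqrt K x \<in> CComm A x"
proof -
  obtain b0 where b0: "b0 \<in> K" "b0 \<in> CComm A x" "b0 * b0 = x"
    using sqrt_exists[OF assms] by blast
  have "sa_sqrt K x = b0"
    unfolding sa_sqrt_def using b0 pos_sqrt_unique[OF assms b0] by blast
  then show "sa_sqrt K x \<in> K" "sa_sqrt K x * sa_sqrt K x = x" "sa_sqrt K x \<in> CComm A x"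
    using b0 by simp_all
qed

lemma ProjD: "e \<in> Proj A \<Longrightarrow> e \<in> A" "e \<in> Proj A \<Longrightarrow> e * e = e"
  by (simp_all add: Proj_def)

lemma Proj_pos: "e \<in> Proj A \<Longrightarrow> e \<in> K"
  by (metis ProjD square_pos)

lemma pcomp_Proj: "e \<in> Proj A \<Longrightarrow> pcomp e \<in> Proj A"
  by (simp add: Proj_def pcomp_def one_mem diff_mem algebra_simps)

lemma Proj_eq_if_same_annihilator:
  assumes e: "e \<in> Proj A" and f: "f \<in> Proj A" and ann: "\<forall>y\<in>A. e * y = 0 \<longleftrightarrow> f * y = 0"
  shows "e = f"
proof -
  have "e * pcomp e = 0" "f * pcomp f = 0"
    using e f by (simp_all add: Proj_def pcomp_def algebra_simps)
  then have "f * pcomp e = 0" "e * pcomp f = 0"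
    using ann ProjD(1)[OF pcomp_Proj] e f by blast+
  then have "(e - f) * (e - f) = 0"
    using e f by (simp add: Proj_def pcomp_def algebra_simps)
  then show ?thesis
    using square_eq_0 diff_mem ProjD(1) e f by (metis right_minus_eq)
qed

lemma carrier_proj:
  assumes "a \<in> A"
  shows carrier_proj_Proj: "carrier_proj A a \<in> Proj A"
    and carrier_proj_annihilator: "\<forall>y\<in>A. a * y = 0 \<longleftrightarrow> carrier_proj A a * y = 0"
proof -
  obtain e where e: "e \<in> Proj A" and ann: "\<forall>y\<in>A. a * y = 0 \<longleftrightarrow> e * y = 0"
    using carrier_exists[OF assms] by (auto simp: Proj_def)
  have "carrier_proj A a = e"
    unfolding carrier_proj_def
    using e ann Proj_eq_if_same_annihilator[OF _ e] by (intro the_equality) auto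
  then show "carrier_proj A a \<in> Proj A" "\<forall>y\<in>A. a * y = 0 \<longleftrightarrow> carrier_proj A a * y = 0"
    using e ann by simp_all
qed

lemma carrier_proj_eq_1D:
  "a \<in> A \<Longrightarrow> carrier_proj A a = 1 \<Longrightarrow> y \<in> A \<Longrightarrow> a * y = 0 \<Longrightarrow> y = 0"
  using carrier_proj_annihilator by fastforce

lemma carrier_proj_eq_1I:
  assumes a: "a \<in> A" and kernel: "\<And>x. x \<in> Proj A \<Longrightarrow> a * x = 0 \<Longrightarrow> x = 0"
  shows "carrier_proj A a = 1"
proof -
  let ?e = "carrier_proj A a"
  have "?e * pcomp ?e = 0"
    using ProjD(2)[OF carrier_proj_Proj[OF a]] by (simp add: pcomp_def algebra_simps)
  then have "a * pcomp ?e = 0"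
    using carrier_proj_annihilator[OF a] ProjD(1)[OF pcomp_Proj[OF carrier_proj_Proj[OF a]]] by blast
  then have "pcomp ?e = 0"
    using kernel pcomp_Proj[OF carrier_proj_Proj[OF a]] by blast
  then show ?thesis
    by (simp add: pcomp_def)
qed

lemma Proj_le_iff:
  assumes e: "e \<in> Proj A" and f: "f \<in> Proj A"
  shows "sa_le K e f \<longleftrightarrow> f * e = e"
proof
  assume "sa_le K e f"
  then have fe: "f - e \<in> K"
    by (simp add: sa_le_def)
  let ?x = "pcomp f"
  have xK: "?x \<in> K" and xA: "?x \<in> A"
    using Proj_pos ProjD pcomp_Proj f by auto
  have "?x * (f - e) * ?x = - (?x * e * ?x)"
    using ProjD(2)[OF f] by (simp add: pcomp_def algebra_simps)
  then have "?x * e * ?x = 0"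
    using cone_antisym sandwich_pos[OF xK fe] sandwich_pos[OF xK Proj_pos[OF e]] by force
  then have "?x * e = 0"
    using sandwich_eq_0[OF xA Proj_pos[OF e]] by blast
  then show "f * e = e"
    by (simp add: pcomp_def algebra_simps)
next
  assume fe: "f * e = e"
  let ?x = "pcomp f"
  have "?x * e * ?x = 0"
    using fe by (simp add: pcomp_def algebra_simps)
  then have "e * ?x = 0"
    using sandwich_eq_0[OF ProjD(1)[OF pcomp_Proj[OF f]] Proj_pos[OF e]] by blast
  then have "e * f = e"
    by (simp add: pcomp_def algebra_simps)
  then have "f - e = (f - e) * (f - e)"
    using fe e f by (simp add: Proj_def algebra_simps)
  then show "sa_le K e f"
    using square_pos diff_mem ProjD(1) e f by (metis sa_le_def)
qed

lemma Proj_le_of_mult_eq_0: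
  assumes r: "r \<in> Proj A" and g: "g \<in> Proj A" and h: "h \<in> K" and rz: "(pcomp g + h) * r = 0"
  shows "sa_le K r g"
proof -
  have rA: "r \<in> A" and rK: "r \<in> K" and gK: "pcomp g \<in> K"
    using r g ProjD Proj_pos pcomp_Proj by auto
  have "r * pcomp g * r + r * h * r = r * ((pcomp g + h) * r)"
    by (simp add: algebra_simps)
  then have "r * pcomp g * r = - (r * h * r)"
    using rz by (simp add: eq_neg_iff_add_eq_0)
  then have "r * pcomp g * r = 0"
    using cone_antisym sandwich_pos[OF rK gK] sandwich_pos[OF rK h] by force
  then have "pcomp g * r = 0"
    using sandwich_eq_0[OF rA gK] by blast
  then have "g * r = r"
    by (simp add: pcomp_def algebra_simps)
  then show ?thesis
    using Proj_le_iff[OF r g] by blast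
qed

lemma pmeet_eq_pcomp_carrier:
  assumes p: "p \<in> Proj A" and f: "f \<in> Proj A"
  shows "pmeet A K p f = pcomp (carrier_proj A (pcomp p + pcomp f))"
proof -
  let ?z = "pcomp p + pcomp f"
  have pK: "pcomp p \<in> K" and fK: "pcomp f \<in> K"
    using Proj_pos pcomp_Proj p f by auto
  then have zA: "?z \<in> A"
    using cone_mem add_mem by blast
  let ?e = "carrier_proj A ?z"
  let ?r = "pcomp ?e"
  have eP: "?e \<in> Proj A" and ann: "\<forall>y\<in>A. ?z * y = 0 \<longleftrightarrow> ?e * y = 0"
    using carrier_proj[OF zA] by auto
  have rP: "?r \<in> Proj A"
    using pcomp_Proj[OF eP] .
  have "?e * ?r = 0"
    using ProjD(2)[OF eP] by (simp add: pcomp_def algebra_simps)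
  then have zr: "?z * ?r = 0"
    using ann ProjD(1)[OF rP] by blast
  have rp: "sa_le K ?r p"
    using Proj_le_of_mult_eq_0[OF rP p fK] zr by simp
  have rf: "sa_le K ?r f"
    using Proj_le_of_mult_eq_0[OF rP f pK] zr by (simp add: add.commute)
  have greatest: "sa_le K x ?r" if x: "x \<in> Proj A" "sa_le K x p" "sa_le K x f" for x
  proof -
    have "p * x = x" "f * x = x"
      using Proj_le_iff x p f by blast+
    then have "?z * x = 0"
      by (simp add: pcomp_def algebra_simps mult_2)
    then have "?e * x = 0"
      using ann ProjD(1)[OF x(1)] by blast
    then have "?r * x = x"
      by (simp add: pcomp_def algebra_simps)
    then show ?thesis
      using Proj_le_iff[OF x(1) rP] by blast
  qed
  show ?thesis
    unfolding pmeet_def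
  proof (rule the_equality)
    show "?r \<in> Proj A \<and> sa_le K ?r p \<and> sa_le K ?r f
        \<and> (\<forall>x\<in>Proj A. sa_le K x p \<and> sa_le K x f \<longrightarrow> sa_le K x ?r)"
      using rP rp rf greatest by blast
  next
    fix r'
    assume r': "r' \<in> Proj A \<and> sa_le K r' p \<and> sa_le K r' f
        \<and> (\<forall>x\<in>Proj A. sa_le K x p \<and> sa_le K x f \<longrightarrow> sa_le K x r')"
    then have "r' - ?r \<in> K" "- (r' - ?r) \<in> K"
      using greatest rP rp rf by (auto simp: sa_le_def)
    then show "r' = ?r"
      using cone_antisym by fastforce
  qed
qed

lemma pmeet_eq_0D:
  assumes g: "g \<in> Proj A" and h: "h \<in> Proj A" and meet: "pmeet A K g h = 0"
    and y: "y \<in> A" and gy: "(pcomp g + pcomp h) * y = 0"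
  shows "y = 0"
proof -
  have "carrier_proj A (pcomp g + pcomp h) = 1"
    using meet pmeet_eq_pcomp_carrier[OF g h] by (simp add: pcomp_def)
  moreover have "pcomp g + pcomp h \<in> A"
    using g h pcomp_Proj ProjD(1) add_mem by blast
  ultimately show ?thesis
    using carrier_proj_eq_1D y gy by blast
qed

lemma diff_Proj_mult_eq_0:
  assumes p: "p \<in> Proj A" and f: "f \<in> Proj A"
    and meet: "pmeet A K p f = 0" and meet_comp: "pmeet A K (pcomp p) (pcomp f) = 0"
    and x: "x \<in> Proj A" and px: "(p - f) * x = 0"
  shows "x = 0"
proof -
  have pA: "p \<in> A" "p * p = p" and fA: "f * f = f" and xA: "x \<in> A"
    using p f x ProjD by auto
  have fx: "f * x = p * x"
    using px by (simp add: algebra_simps)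
  have fpx: "f * (p * x) = p * x"
    using fA fx by (metis mult.assoc)
  have "(pcomp p + pcomp f) * (p * x * p) = (p * x * p - (p * p) * x * p) + (p * x * p - f * (p * x) * p)"
    by (simp add: pcomp_def algebra_simps mult_2)
  also have "\<dots> = 0"
    using pA fpx by (simp add: mult.assoc)
  finally have "p * x * p = 0"
    using pmeet_eq_0D[OF p f meet] sandwich_mem[OF pA(1) xA] by blast
  then have "p * x = 0" "f * x = 0"
    using sandwich_eq_0[OF pA(1) Proj_pos[OF x]] fx by auto
  then have "(pcomp (pcomp p) + pcomp (pcomp f)) * x = 0"
    by (simp add: pcomp_def algebra_simps)
  then show ?thesis
    using pmeet_eq_0D[OF pcomp_Proj[OF p] pcomp_Proj[OF f] meet_comp xA] by blast
qed

lemma generic_position_carrier_proj: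
  assumes p: "p \<in> Proj A" and q: "q \<in> Proj A" and gen: "generic_position A K p q"
  shows "carrier_proj A (p - pcomp q) = 1" and "carrier_proj A (p - q) = 1"
proof -
  have pq: "p \<in> A" "q \<in> A" "pcomp q \<in> A"
    using p q ProjD pcomp_Proj by auto
  have "pcomp (pcomp q) = q"
    by (simp add: pcomp_def)
  then show "carrier_proj A (p - pcomp q) = 1"
    using gen diff_Proj_mult_eq_0[OF p pcomp_Proj[OF q]] diff_mem pq
    by (intro carrier_proj_eq_1I) (auto simp: generic_position_def)
  show "carrier_proj A (p - q) = 1"
    using gen diff_Proj_mult_eq_0[OF p q] diff_mem pq
    by (intro carrier_proj_eq_1I) (auto simp: generic_position_def)
qed

lemma carrier_proj_commute:
  assumes dA: "d \<in> A" and gA: "g \<in> A" and dg: "d * g = g * d"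
  shows "d * carrier_proj A g = carrier_proj A g * d"
proof -
  let ?e = "carrier_proj A g"
  let ?x = "pcomp ?e"
  have eA: "?e \<in> A" "?e * ?e = ?e" and ann: "\<forall>y\<in>A. g * y = 0 \<longleftrightarrow> ?e * y = 0"
    using carrier_proj[OF gA] ProjD by auto
  have xA: "?x \<in> A"
    using pcomp_Proj[OF carrier_proj_Proj[OF gA]] ProjD by auto
  have ex: "?e * ?x = 0" "?x * ?e = 0"
    using eA by (simp_all add: pcomp_def algebra_simps)
  then have gx: "g * ?x = 0"
    using ann xA by blast
  then have ge: "g * ?e = g"
    by (simp add: pcomp_def algebra_simps)
  define w where "w = ?e * d * ?x + ?x * d * ?e"
  have "w = d - ?e * d * ?e - ?x * d * ?x"
    by (simp add: w_def pcomp_def algebra_simps)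
  then have wA: "w \<in> A"
    using sandwich_mem[OF eA(1) dA] sandwich_mem[OF xA dA] dA diff_mem by simp
  have "g * w = (g * ?e) * d * ?x + (g * ?x) * d * ?e"
    by (simp add: w_def algebra_simps)
  also have "\<dots> = g * d * ?x"
    using ge gx by simp
  also have "\<dots> = d * (g * ?x)"
    using dg by (metis mult.assoc)
  finally have "?e * w = 0"
    using ann wA gx by simp
  moreover have "?e * w = (?e * ?e) * d * ?x + (?e * ?x) * d * ?e"
    by (simp add: w_def algebra_simps)
  ultimately have edx: "?e * d * ?x = 0"
    using eA ex by simp
  then have "w * w = ?x * d * (?e * ?x) * d * ?e"
    by (simp add: w_def mult.assoc)
  then have "w = 0"
    using square_eq_0[OF wA] ex by simp
  then have xde: "?x * d * ?e = 0"
    using edx by (simp add: w_def)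
  have "d * ?e = ?e * d * ?e"
    using xde by (simp add: pcomp_def algebra_simps)
  also have "\<dots> = ?e * d * (?e + ?x)"
    using edx by (simp add: algebra_simps)
  also have "\<dots> = ?e * d"
    by (simp add: pcomp_def)
  finally show ?thesis .
qed

lemma carrier_proj_sa_abs:
  assumes aA: "a \<in> A" and faithful: "carrier_proj A a = 1"
  shows "carrier_proj A (sa_abs K a) = 1"
proof (rule carrier_proj_eq_1I)
  have "sa_abs K a \<in> K"
    unfolding sa_abs_def using sa_sqrt_pos[OF square_pos[OF aA]] .
  then show "sa_abs K a \<in> A"
    by (rule cone_mem)
next
  fix x
  assume x: "x \<in> Proj A" and cx: "sa_abs K a * x = 0"
  have xA: "x \<in> A"
    using ProjD(1)[OF x] .
  have "a * a * x = sa_abs K a * (sa_abs K a * x)"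
    unfolding sa_abs_def using sa_sqrt_square[OF square_pos[OF aA]] by (metis mult.assoc)
  then have aax: "a * a * x = 0"
    using cx by simp
  have "(a * x * a) * (a * x * a) = a * x * (a * a * x) * a"
    by (simp add: mult.assoc)
  then have "a * x * a = 0"
    using aax square_eq_0[OF sandwich_mem[OF aA xA]] by simp
  then have "a * x = 0"
    using sandwich_eq_0[OF aA Proj_pos[OF x]] by blast
  then show "x = 0"
    using carrier_proj_eq_1D[OF aA faithful xA] by blast
qed

text \<open>Applied to \<open>g = |a| + a\<close> and \<open>h = |a| - a\<close>, this yields the polar symmetry of a.\<close>

lemma orthogonal_carriers_symmetry:
  assumes gA: "g \<in> A" and hA: "h \<in> A" and gh: "g * h = 0" "h * g = 0"
    and faithful: "carrier_proj A (g - h) = 1"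
  defines "t \<equiv> carrier_proj A g - carrier_proj A h"
  shows "t * t = 1" and "(g + h) * t = g - h" and "t * (g + h) = g - h"
proof -
  define e f where "e = carrier_proj A g" and "f = carrier_proj A h"
  have eP: "e \<in> Proj A" and fP: "f \<in> Proj A"
    and annE: "\<forall>y\<in>A. g * y = 0 \<longleftrightarrow> e * y = 0" and annF: "\<forall>y\<in>A. h * y = 0 \<longleftrightarrow> f * y = 0"
    using carrier_proj gA hA by (auto simp: e_def f_def)
  have eA: "e \<in> A" "e * e = e" and fA: "f \<in> A" "f * f = f"
    using eP fP ProjD by auto
  have eh: "e * h = 0" and fg: "f * g = 0"
    using annE annF gh gA hA by blast+
  have he: "h * e = 0" and gf: "g * f = 0"
    using mult_eq_0_commute eA fA gA hA eh fg by blast+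
  have ef: "e * f = 0" and fe: "f * e = 0"
    using annE annF gf he eA fA by blast+
  have compA: "pcomp e \<in> A" "pcomp f \<in> A"
    using eP fP pcomp_Proj ProjD by blast+
  have "e * pcomp e = 0" "f * pcomp f = 0"
    using eA fA by (simp_all add: pcomp_def algebra_simps)
  then have "g * pcomp e = 0" "h * pcomp f = 0"
    using annE annF compA by blast+
  moreover from this have "pcomp e * g = 0" "pcomp f * h = 0"
    using mult_eq_0_commute gA hA compA by blast+
  ultimately have ge: "g * e = g" and eg: "e * g = g" and hf: "h * f = h" and fh: "f * h = h"
    by (simp_all add: pcomp_def algebra_simps)
  have "(g - h) * (1 - e - f) = 0"
    using ge gf he hf by (simp add: algebra_simps)
  then have "1 - e - f = 0"
    using carrier_proj_eq_1D[OF diff_mem[OF gA hA] faithful] one_mem eA fA diff_mem by blast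
  then have e_f: "e + f = 1"
    by (simp add: algebra_simps)
  show "t * t = 1"
    using eA fA ef fe e_f by (simp add: t_def e_def[symmetric] f_def[symmetric] algebra_simps)
  show "(g + h) * t = g - h"
    using ge gf he hf by (simp add: t_def e_def[symmetric] f_def[symmetric] algebra_simps)
  show "t * (g + h) = g - h"
    using eg eh fg fh by (simp add: t_def e_def[symmetric] f_def[symmetric] algebra_simps)
qed

lemma sa_abs:
  assumes "a \<in> A"
  shows sa_abs_mem: "sa_abs K a \<in> A"
    and sa_abs_square: "sa_abs K a * sa_abs K a = a * a"
    and sa_abs_commute: "d \<in> A \<Longrightarrow> d * (a * a) = (a * a) * d \<Longrightarrow> sa_abs K a * d = d * sa_abs K a"
  using sa_sqrt[OF square_pos[OF assms]] cone_mem CComm_commute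
  by (simp_all add: sa_abs_def)

lemma polar_sym_faithful:
  assumes aA: "a \<in> A" and faithful: "carrier_proj A a = 1"
  shows polar_sym_mem: "polar_sym A K a \<in> A"
    and polar_sym_square: "polar_sym A K a * polar_sym A K a = 1"
    and sa_abs_mult_polar_sym: "sa_abs K a * polar_sym A K a = a"
    and polar_sym_mult_sa_abs: "polar_sym A K a * sa_abs K a = a"
    and polar_sym_commute: "d \<in> A \<Longrightarrow> d * a = a * d \<Longrightarrow> polar_sym A K a * d = d * polar_sym A K a"
proof -
  define c where "c = sa_abs K a"
  have cA: "c \<in> A" and cc: "c * c = a * a"
    using sa_abs[OF aA] by (simp_all add: c_def)
  have c_comm: "c * d = d * c" if "d \<in> A" "d * a = a * d" for d
    using sa_abs_commute[OF aA that(1)] that(2) by (metis c_def mult.assoc)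
  have ca: "c * a = a * c"
    using c_comm[OF aA] by simp
  define g h where "g = c + a" and "h = c - a"
  have gA: "g \<in> A" and hA: "h \<in> A"
    using cA aA add_mem diff_mem by (simp_all add: g_def h_def)
  have gh: "g * h = 0" "h * g = 0"
    using ca cc by (simp_all add: g_def h_def algebra_simps)
  have gh_faithful: "carrier_proj A (g - h) = 1"
  proof (rule carrier_proj_eq_1I)
    show "g - h \<in> A"
      using gA hA by (rule diff_mem)
    fix x
    assume x: "x \<in> Proj A" and "(g - h) * x = 0"
    then have "a * x + a * x = 0 + 0"
      by (simp add: g_def h_def algebra_simps)
    then show "x = 0"
      using add_self_cancel carrier_proj_eq_1D[OF aA faithful] ProjD(1)[OF x] by blast
  qed
  define t where "t = carrier_proj A g - carrier_proj A h"
  note t = orthogonal_carriers_symmetry[OF gA hA gh gh_faithful, folded t_def]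
  have tA: "t \<in> A"
    using carrier_proj_Proj[OF gA] carrier_proj_Proj[OF hA] ProjD diff_mem by (simp add: t_def)
  have "c * t + c * t = a + a" "t * c + t * c = a + a"
    using t(2,3) by (simp_all add: g_def h_def algebra_simps)
  then have ct: "c * t = a" and tc: "t * c = a"
    using add_self_cancel by blast+
  have t_comm: "t * d = d * t" if "d \<in> A" "d * a = a * d" for d
  proof -
    have "d * g = g * d" "d * h = h * d"
      using c_comm[OF that] that(2) by (simp_all add: g_def h_def algebra_simps)
    then show ?thesis
      using carrier_proj_commute[OF that(1) gA] carrier_proj_commute[OF that(1) hA]
      by (simp add: t_def algebra_simps)
  qed
  have "t \<in> CComm A a"
    using tA t_comm by (auto simp: CComm_def Comm_def)
  have "signum A K a = t"
    unfolding signum_def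
  proof (rule the_equality)
    show "t \<in> A \<and> t * t = carrier_proj A a \<and> t \<in> CComm A a
        \<and> a = sa_abs K a * t \<and> a = t * sa_abs K a"
      using tA t(1) faithful \<open>t \<in> CComm A a\<close> ct tc by (simp add: c_def)
  next
    fix t'
    assume t': "t' \<in> A \<and> t' * t' = carrier_proj A a \<and> t' \<in> CComm A a
        \<and> a = sa_abs K a * t' \<and> a = t' * sa_abs K a"
    then have "c * (t' - t) = 0"
      using ct by (simp add: c_def algebra_simps)
    moreover have "t' - t \<in> A"
      using t' tA diff_mem by blast
    ultimately have "t' - t = 0"
      using carrier_proj_eq_1D[OF cA carrier_proj_sa_abs[OF aA faithful, folded c_def]] by blast
    then show "t' = t"
      by simp
  qed
  then have "polar_sym A K a = t"
    by (simp add: polar_sym_def faithful pcomp_def)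
  then show "polar_sym A K a \<in> A" "polar_sym A K a * polar_sym A K a = 1"
    "sa_abs K a * polar_sym A K a = a" "polar_sym A K a * sa_abs K a = a"
    "d \<in> A \<Longrightarrow> d * a = a * d \<Longrightarrow> polar_sym A K a * d = d * polar_sym A K a"
    using tA t(1) ct tc t_comm by (simp_all add: c_def)
qed

lemma anticommuting_cs_frame:
  assumes aA: "a \<in> A" and bA: "b \<in> A"
    and a_faithful: "carrier_proj A a = 1" and b_faithful: "carrier_proj A b = 1"
    and ab: "a * b = - (b * a)" and sq: "a * a + b * b = 1"
  defines "c \<equiv> sa_abs K a" and "s \<equiv> sa_abs K b"
    and "u \<equiv> polar_sym A K a" and "v \<equiv> polar_sym A K b"
  shows "cs_frame c s u v"
proof -
  note u = polar_sym_faithful[OF aA a_faithful, folded u_def c_def]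
  note v = polar_sym_faithful[OF bA b_faithful, folded v_def s_def]
  have cA: "c \<in> A" and sA: "s \<in> A"
    using sa_abs_mem aA bA by (simp_all add: c_def s_def)
  have c_comm: "c * d = d * c" if "d \<in> A" "d * (a * a) = (a * a) * d" for d
    using sa_abs_commute[OF aA that] by (simp add: c_def)
  have s_comm: "s * d = d * s" if "d \<in> A" "d * (b * b) = (b * b) * d" for d
    using sa_abs_commute[OF bA that] by (simp add: s_def)
  have "a * (b * b) = (b * b) * a"
  proof -
    have "a * (b * b) = - (b * a * b)"
      using ab by (simp add: mult.assoc[symmetric])
    also have "\<dots> = (b * b) * a"
      using ab by (simp add: mult.assoc)
    finally show ?thesis .
  qed
  moreover have "b * (a * a) = (a * a) * b"
  proof -
    have "b * (a * a) = - (a * (b * a))"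
      using ab by (simp add: mult.assoc[symmetric])
    also have "\<dots> = (a * a) * b"
      using ab by (simp add: mult.assoc)
    finally show ?thesis .
  qed
  ultimately have sa: "s * a = a * s" and cb: "c * b = b * c"
    using s_comm[OF aA] c_comm[OF bA] by auto
  have "s * (b * b) = (b * b) * s"
    using sa_abs_square[OF bA] by (metis s_def mult.assoc)
  moreover have "a * a = 1 - b * b"
    using sq by (simp add: algebra_simps)
  ultimately have "s * (a * a) = (a * a) * s"
    by (simp add: right_diff_distrib left_diff_distrib)
  then have cs: "c * s = s * c"
    using c_comm[OF sA] by simp
  have us: "u * s = s * u"
    using u(5)[OF sA] sa by simp
  have vc: "v * c = c * v"
    using v(5)[OF cA] cb by simp
  have ss: "s * s = 1 - c * c"
    using sa_abs_square aA bA sq by (simp add: c_def s_def algebra_simps)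
  have "v * u = - (u * v)"
  proof -
    define y where "y = u * v + v * u"
    have yA: "y \<in> A"
      using jordan_mem u(1) v(1) by (simp add: y_def)
    have vs: "v * s = s * v"
      using v(3,4) by simp
    have "s * (u * v) = u * v * s" "s * (v * u) = v * u * s"
      using us vs by (metis mult.assoc)+
    then have sy: "s * y = y * s"
      by (simp add: y_def algebra_simps)
    have "a * b = c * s * (u * v)"
      using u(3) v(3) us by (metis mult.assoc)
    moreover have "b * a = c * s * (v * u)"
      using u(3) v(3) vc cs by (metis mult.assoc)
    ultimately have "c * (s * y) = a * b + b * a"
      by (simp add: y_def algebra_simps)
    then have "c * (s * y) = 0"
      using ab by simp
    then have "s * y = 0"
      using carrier_proj_eq_1D[OF cA carrier_proj_sa_abs[OF aA a_faithful, folded c_def]]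
        commuting_mult_mem[OF sA yA sy] by blast
    then have "y = 0"
      using carrier_proj_eq_1D[OF sA carrier_proj_sa_abs[OF bA b_faithful, folded s_def] yA] by blast
    then show ?thesis
      by (simp add: y_def eq_neg_iff_add_eq_0 add.commute)
  qed
  then show ?thesis
    using u(2,3,4) v(2,3,4) us vc cs ss by unfold_locales auto
qed

lemma generic_position_cs_frame_proj:
  assumes pP: "p \<in> Proj A" and qP: "q \<in> Proj A" and gen: "generic_position A K p q"
  defines "c \<equiv> sa_abs K (p - pcomp q)" and "s \<equiv> sa_abs K (p - q)"
    and "u \<equiv> polar_sym A K (p - pcomp q)" and "v \<equiv> polar_sym A K (p - q)"
  shows "cs_frame_proj c s u v p" and "s * u - c * v \<in> A" and "c * u + s * v \<in> A"
proof -
  define a b where "a = p - pcomp q" and "b = p - q"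
  have pA: "p \<in> A" "p * p = p" and qA: "q \<in> A" "q * q = q"
    using pP qP by (simp_all add: Proj_def)
  have aA: "a \<in> A" and bA: "b \<in> A"
    using pA qA one_mem diff_mem by (simp_all add: a_def b_def pcomp_def)
  note faithful = generic_position_carrier_proj[OF pP qP gen, folded a_def b_def]
  note ab = idempotent_diff_identities[OF pA(2) qA(2), folded a_def b_def]
  have cA: "c \<in> A" and sA: "s \<in> A"
    using sa_abs_mem aA bA by (simp_all add: c_def s_def a_def b_def)
  have u: "u \<in> A" "c * u = a"
    using polar_sym_faithful[OF aA faithful(1)] by (simp_all add: u_def c_def a_def)
  have v: "v \<in> A" "s * v = b"
    using polar_sym_faithful[OF bA faithful(2)] by (simp_all add: v_def s_def b_def)
  have "cs_frame c s u v"
    using anticommuting_cs_frame[OF aA bA faithful ab(1,2)] by (simp add: c_def s_def u_def v_def a_def b_def)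
  then show "cs_frame_proj c s u v p"
    by (rule cs_frame_proj.intro) (simp add: cs_frame_proj_axioms_def u(2) v(2) a_def b_def pcomp_def mult_2)
  have "s * u \<in> A" "c * v \<in> A"
    using commuting_mult_mem cA sA u(1) v(1) cs_frame.us[OF \<open>cs_frame c s u v\<close>]
      cs_frame.vc[OF \<open>cs_frame c s u v\<close>] by simp_all
  then show "s * u - c * v \<in> A"
    by (rule diff_mem)
  show "c * u + s * v \<in> A"
    using add_mem aA bA u(2) v(2) by simp
qed

end

theorem theorem7p5:
  fixes A K :: "'a::real_algebra_1 set" and p q :: 'a
  assumes SA: "synaptic_algebra A K"
    and pP: "p \<in> Proj A" and qP: "q \<in> Proj A"
    and gen: "generic_position A K p q"
  defines "c \<equiv> sa_sqrt K (p * q * p + pcomp p * pcomp q * pcomp p)"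
    and "s \<equiv> sa_sqrt K (p * pcomp q * p + pcomp p * q * pcomp p)"
    and "u \<equiv> polar_sym A K (p - pcomp q)"
    and "v \<equiv> polar_sym A K (p - q)"
    and "j \<equiv> polar_sym A K (p - pcomp q) * polar_sym A K (p - q) * p + p * polar_sym A K (p - q) * polar_sym A K (p - pcomp q)"
    and "l \<equiv> 2 * p - 1"
  shows "(symmetry A j \<and> j * p * j = pcomp p)
    \<and> (j * s = s * j \<and> j * c = c * j)
    \<and> (j = p * j + j * p)
    \<and> (l = p - pcomp p \<and> l = c * u + s * v \<and> symmetry A l
         \<and> l * p = p * l \<and> l * c = c * l \<and> l * s = s * l)"
proof -
  interpret synaptic A K
    using SA by (rule synaptic.intro)
  have pA: "p * p = p" and qA: "q * q = q"
    using pP qP by (simp_all add: Proj_def)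
  have c_eq: "c = sa_abs K (p - pcomp q)" and s_eq: "s = sa_abs K (p - q)"
    using idempotent_diff_identities(3,4)[OF pA qA] by (simp_all add: c_def s_def sa_abs_def)
  note frame = generic_position_cs_frame_proj[OF pP qP gen, folded c_eq s_eq u_def v_def]
  interpret cs_frame_proj c s u v p
    by (fact frame(1))
  have j_eq: "j = s * u - c * v"
    using polar_product_eq by (simp add: j_def u_def v_def)
  have l_eq: "l = c * u + s * v"
    using rotation_eq by (simp add: l_def)
  have "symmetry A j \<and> j * p * j = pcomp p \<and> (j * s = s * j \<and> j * c = c * j) \<and> j = p * j + j * p"
    using frame(2) exchange_sq exchange_proj exchange_comm exchange_split
    unfolding j_eq by (simp add: symmetry_def pcomp_def)
  moreover have "l = p - pcomp p" "l * p = p * l"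
    by (simp_all add: l_def pcomp_def algebra_simps mult_2)
  moreover have "symmetry A l \<and> l * c = c * l \<and> l * s = s * l"
    using frame(3) rotation_sq rotation_comm unfolding l_eq by (simp add: symmetry_def)
  ultimately show ?thesis
    using l_eq by blast
qed

end
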